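(* Let $X_M^{(0)}, X_S^{(0)}$ be scalar random variables such that $[X_M^{(0)},X_S^{(0)}]$ is bivariate normal with mean zero, unit variances and covariance $\rho$. Let $X_S^{(t)}$ and $X_S^{(t+1)}$ be generated from $X_S^{(0)}$ by a forward noising process (independent of $X_M^{(0)}$ given $X_S^{(0)}$, and with $X_S^{(t+1)}$ independent of $(X_S^{(0)},X_M^{(0)})$ given $X_S^{(t)}$) with $X_S^{(t)}\mid X_S^{(0)}\sim\mathcal{N}(\sqrt{\alpha}\,X_S^{(0)},1-\alpha)$ and $X_S^{(t+1)}\mid X_S^{(t)}\sim\mathcal{N}(\sqrt{1-\beta}\,X_S^{(t)},\beta)$, where $\alpha,\beta\in(0,1)$. Then $\mathrm{Var}[X_S^{(t)}\mid X_S^{(t+1)}]=\beta$ and $\mathrm{Var}[X_S^{(t)}\mid X_S^{(t+1)},X_M^{(0)}]\le\beta(1-\beta\rho^2\alpha)$. *)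

theory Defs
  imports "HOL-Probability.Probability"
begin

definition normal_measure :: "real \<Rightarrow> real \<Rightarrow> real measure" where
  "normal_measure mu v =
     (if v > 0 then density lborel (normal_density mu (sqrt v)) else return borel mu)"

text \<open>X, Y are jointly (bivariate) normal with mean zero, unit variances and
  covariance rho: every linear combination a X + b Y is normal with mean 0 and
  variance a^2 + 2 a b rho + b^2 (the standard Cramer-Wold definition).\<close>
definition std_bivariate_normal ::
  "'a measure \<Rightarrow> ('a \<Rightarrow> real) \<Rightarrow> ('a \<Rightarrow> real) \<Rightarrow> real \<Rightarrow> bool" where
  "std_bivariate_normal M X Y rho \<longleftrightarrow>
     X \<in> borel_measurable M \<and> Y \<in> borel_measurable M \<and> \<bar>rho\<bar> \<le> 1 \<and>
     (\<forall>a b. distr M borel (\<lambda>w. a * X w + b * Y w)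
              = normal_measure 0 (a\<^sup>2 + 2 * a * b * rho + b\<^sup>2))"

definition sigma_rv :: "'a measure \<Rightarrow> ('a \<Rightarrow> 'b::topological_space) \<Rightarrow> 'a measure" where
  "sigma_rv M Y = vimage_algebra (space M) Y borel"

definition cond_var :: "'a measure \<Rightarrow> 'a measure \<Rightarrow> ('a \<Rightarrow> real) \<Rightarrow> 'a \<Rightarrow> real" where
  "cond_var M F X = real_cond_exp M F (\<lambda>w. (X w - real_cond_exp M F X w)\<^sup>2)"

end

(*
  All four variables are jointly Gaussian: integrating out the two Gaussian noising kernels and
  then the bivariate normal law of (XM0, XS0) gives E exp (i L) = exp (- Var L / 2) for every
  linear combination L of them.  For jointly Gaussian variables, uncorrelated means independent:
  the joint characteristic function of the conditioning variables W and a residual R factorizes,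
  and characteristic functions determine laws on products with the real line.  Writing
  XSt = g (W) + R with R the residual of the linear regression of XSt on W, the conditional
  variance is therefore the constant Var R.  For W = XSt1 this is 1 - (1 - beta) = beta; for
  W = (XSt1, XM0) it is beta (1 - k^2) / (1 - (1 - beta) k^2) <= beta (1 - beta k^2), where
  k^2 = alpha rho^2.
*)

theory Submission
  imports Defs
begin

section \<open>Normal laws\<close>

lemma prob_space_std_normal_distribution: "prob_space std_normal_distribution"
  by (rule real_distribution.axioms(1)[OF real_dist_normal_dist])

lemma normal_measure_eq_distr_std_normal:
  assumes "v \<ge> 0"
  shows "normal_measure mu v = distr std_normal_distribution borel (\<lambda>x. mu + sqrt v * x)"
proof -
  interpret std: prob_space std_normal_distribution
    by (rule prob_space_std_normal_distribution)
  show ?thesis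
  proof (cases "v > 0")
    case True
    have "distributed std_normal_distribution lborel (\<lambda>x. x) std_normal_density"
      by (simp add: distributed_def distr_id2)
    from std.normal_density_affine[OF this, of "sqrt v" mu] True
    have "distr std_normal_distribution lborel (\<lambda>x. mu + sqrt v * x) =
        density lborel (normal_density mu (sqrt v))"
      by (simp add: distributed_def)
    moreover have "distr std_normal_distribution lborel (\<lambda>x. mu + sqrt v * x) =
        distr std_normal_distribution borel (\<lambda>x. mu + sqrt v * x)"
      by (rule distr_cong) auto
    ultimately show ?thesis
      using True by (simp add: normal_measure_def)
  next
    case False
    with assms show ?thesis
      by (simp add: normal_measure_def)
  qed
qed

lemma sets_normal_measure [simp, measurable_cong]: "sets (normal_measure mu v) = sets borel"
  by (simp add: normal_measure_def)

lemma space_normal_measure [simp]: "space (normal_measure mu v) = UNIV"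
  using sets_eq_imp_space_eq[OF sets_normal_measure] by simp

lemma prob_space_normal_measure: "v \<ge> 0 \<Longrightarrow> prob_space (normal_measure mu v)"
  by (simp add: normal_measure_eq_distr_std_normal prob_space.prob_space_distr
      prob_space_std_normal_distribution)

lemma measurable_normal_measure [measurable]:
  assumes [measurable]: "f \<in> borel_measurable N"
  shows "(\<lambda>x. normal_measure (f x) v) \<in> N \<rightarrow>\<^sub>M subprob_algebra borel"
proof (cases "v \<ge> 0")
  case True
  have "(\<lambda>x. distr std_normal_distribution borel (\<lambda>y. f x + sqrt v * y)) \<in> N \<rightarrow>\<^sub>M subprob_algebra borel"
    by (rule measurable_distr2[where M = borel]) (auto simp: space_subprob_algebra
        prob_space_imp_subprob_space prob_space_std_normal_distribution)
  then show ?thesis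
    by (simp add: normal_measure_eq_distr_std_normal[OF True])
next
  case False
  then show ?thesis
    by (simp add: normal_measure_def measurable_compose[OF assms return_measurable])
qed

lemma integral_iexp_normal_measure:
  assumes "v \<ge> 0"
  shows "(\<integral>x. iexp (a + t * x) \<partial>normal_measure mu v) = iexp (a + t * mu) * exp (- t\<^sup>2 * v / 2)"
proof -
  have "(\<integral>x. iexp (a + t * x) \<partial>normal_measure mu v) =
      (\<integral>x. iexp (a + t * mu) * iexp ((t * sqrt v) * x) \<partial>std_normal_distribution)"
    by (simp add: normal_measure_eq_distr_std_normal[OF assms] integral_distr
        exp_add[symmetric] algebra_simps)
  also have "\<dots> = iexp (a + t * mu) * char std_normal_distribution (t * sqrt v)"
    by (simp add: char_def)
  also have "\<dots> = iexp (a + t * mu) * exp (- t\<^sup>2 * v / 2)"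
    using assms by (simp add: char_std_normal_distribution power_mult_distrib)
  finally show ?thesis .
qed

lemma (in prob_space) normal_law_moments:
  assumes [measurable]: "L \<in> borel_measurable M"
    and law: "distr M borel L = normal_measure 0 q" and "q \<ge> 0"
  shows "integrable M L" "integrable M (\<lambda>w. (L w)\<^sup>2)" "expectation L = 0"
    "expectation (\<lambda>w. (L w)\<^sup>2) = q"
proof -
  have std: "distr M borel L = distr std_normal_distribution borel (\<lambda>x. sqrt q * x)"
    using law normal_measure_eq_distr_std_normal[OF \<open>q \<ge> 0\<close>, of 0] by simp
  have integrable_iff: "integrable M (\<lambda>w. f (L w)) \<longleftrightarrow>
      integrable std_normal_distribution (\<lambda>x. f (sqrt q * x))"
    if [measurable]: "f \<in> borel_measurable borel" for f :: "real \<Rightarrow> real"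
    by (simp add: integrable_distr_eq[symmetric, of L M borel f] std integrable_distr_eq)
  have integral_eq: "(\<integral>w. f (L w) \<partial>M) = (\<integral>x. f (sqrt q * x) \<partial>std_normal_distribution)"
    if [measurable]: "f \<in> borel_measurable borel" for f :: "real \<Rightarrow> real"
    by (simp add: integral_distr[symmetric, of L M borel f] std integral_distr)
  show "integrable M L"
    using integrable_iff[of "\<lambda>x. x"] integrable_std_normal_distribution_moment[of 1] by simp
  show "integrable M (\<lambda>w. (L w)\<^sup>2)"
    using integrable_iff[of "\<lambda>x. x\<^sup>2"] integrable_std_normal_distribution_moment[of 2]
    by (simp add: power_mult_distrib)
  show "expectation L = 0"
    using integral_eq[of "\<lambda>x. x"] integral_std_normal_distribution_moment_odd[of 1] by simp
  show "expectation (\<lambda>w. (L w)\<^sup>2) = q"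
    using integral_eq[of "\<lambda>x. x\<^sup>2"] std_normal_distribution_even_moments(1)[of 1] \<open>q \<ge> 0\<close>
    by (simp add: power_mult_distrib)
qed

section \<open>Characteristic functions determine laws on products with the real line\<close>

lemma real_distribution_density_inverse_mass:
  fixes M :: "real measure"
  assumes "finite_measure M" "sets M = sets borel" "c > 0" "measure M UNIV = c"
  shows "real_distribution (density M (\<lambda>_. ennreal (1 / c)))"
proof -
  interpret finite_measure M by fact
  have "space M = UNIV"
    using sets_eq_imp_space_eq[OF \<open>sets M = sets borel\<close>] by simp
  then have "emeasure (density M (\<lambda>_. ennreal (1 / c))) (space M) = 1"
    using assms by (simp add: emeasure_density_const emeasure_eq_measure ennreal_mult[symmetric])
  then show ?thesis
    by (simp add: real_distribution_def real_distribution_axioms_def prob_spaceI \<open>sets M = sets borel\<close>)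
qed

lemma finite_measure_eqI_char:
  fixes mu nu :: "real measure"
  assumes "finite_measure mu" "finite_measure nu"
    and sets: "sets mu = sets borel" "sets nu = sets borel"
    and char_eq: "\<And>t. (\<integral>x. iexp (t * x) \<partial>mu) = (\<integral>x. iexp (t * x) \<partial>nu)"
  shows "mu = nu"
proof -
  interpret mu: finite_measure mu by fact
  interpret nu: finite_measure nu by fact
  have space [simp]: "space mu = UNIV" "space nu = UNIV"
    using sets_eq_imp_space_eq[OF sets(1)] sets_eq_imp_space_eq[OF sets(2)] by auto
  define c where "c = measure mu UNIV"
  have c_nu: "measure nu UNIV = c"
    using char_eq[of 0] by (simp add: c_def)
  show ?thesis
  proof (cases "c = 0")
    case True
    then have "emeasure mu A = 0" "emeasure nu A = 0" for A
      using emeasure_space[of mu A] emeasure_space[of nu A] c_nu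
      by (simp_all add: c_def mu.emeasure_eq_measure nu.emeasure_eq_measure)
    then show ?thesis
      by (intro measure_eqI) (simp_all add: sets)
  next
    case False
    then have "c > 0"
      by (simp add: c_def order_le_neq_trans)
    define normalize :: "real measure \<Rightarrow> real measure"
      where "normalize M = density M (\<lambda>_. ennreal (1 / c))" for M
    have char_normalize: "char (normalize M) t = (\<integral>x. iexp (t * x) \<partial>M) /\<^sub>R c"
      if "sets M = sets borel" for M t
      using \<open>c > 0\<close> that
      by (simp add: char_def normalize_def integral_density measurable_cong_sets[OF that refl] divide_inverse)
    have "char (normalize mu) = char (normalize nu)"
      by (rule ext) (simp only: char_normalize[OF sets(1)] char_normalize[OF sets(2)] char_eq)
    then have "normalize mu = normalize nu"
      using assms \<open>c > 0\<close> c_nu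
      by (intro Levy_uniqueness) (simp_all add: normalize_def real_distribution_density_inverse_mass c_def)
    then have "density (normalize mu) (\<lambda>_. ennreal c) = density (normalize nu) (\<lambda>_. ennreal c)"
      by simp
    then show ?thesis
      using \<open>c > 0\<close>
      by (simp add: normalize_def density_density_eq ennreal_mult[symmetric] density_1)
  qed
qed

text \<open>Finite rather than probability measures: the product step applies this property to
  weighted marginals.\<close>

definition determining_family :: "'a measure \<Rightarrow> ('i \<Rightarrow> 'a \<Rightarrow> complex) \<Rightarrow> bool" where
  "determining_family A Phi \<longleftrightarrow>
     (\<forall>i. Phi i \<in> borel_measurable A \<and> (\<forall>x. cmod (Phi i x) \<le> 1)) \<and>
     (\<forall>mu nu. finite_measure mu \<longrightarrow> finite_measure nu \<longrightarrow> sets mu = sets A \<longrightarrow> sets nu = sets A \<longrightarrow>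
        (\<forall>i. (\<integral>x. Phi i x \<partial>mu) = (\<integral>x. Phi i x \<partial>nu)) \<longrightarrow> mu = nu)"

lemma determining_family_iexp: "determining_family borel (\<lambda>t x. iexp (t * x))"
  by (auto simp: determining_family_def intro!: finite_measure_eqI_char)

lemma finite_measure_distr_density:
  assumes "finite_measure M" "w \<in> borel_measurable M" "\<And>x. 0 \<le> w x" "\<And>x. w x \<le> K"
    and "f \<in> M \<rightarrow>\<^sub>M N"
  shows "finite_measure (distr (density M (\<lambda>x. ennreal (w x))) N f)"
proof -
  interpret finite_measure M by fact
  have "(\<integral>\<^sup>+x. ennreal (w x) \<partial>M) \<le> (\<integral>\<^sup>+x. ennreal K \<partial>M)"
    by (intro nn_integral_mono ennreal_leI assms(4))
  also have "\<dots> < \<infinity>"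
    using emeasure_finite[of "space M"] by (simp add: ennreal_mult_eq_top_iff less_top[symmetric])
  finally have "finite_measure (density M (\<lambda>x. ennreal (w x)))"
    using assms(2) by (intro finite_measureI) (simp add: emeasure_density)
  then show ?thesis
    using assms(5) by (intro finite_measure.finite_measure_distr)
      (simp_all add: measurable_cong_sets[OF sets_density refl])
qed

lemma measure_eqI_pair_rectangles:
  assumes "finite_measure mu" "sets mu = sets (A \<Otimes>\<^sub>M B)" "sets nu = sets (A \<Otimes>\<^sub>M B)"
    and rect: "\<And>X Y. X \<in> sets A \<Longrightarrow> Y \<in> sets B \<Longrightarrow> emeasure mu (X \<times> Y) = emeasure nu (X \<times> Y)"
  shows "mu = nu"
proof (rule measure_eqI_generator_eq[OF Int_stable_pair_measure_generator[of A B]])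
  show "{X \<times> Y |X Y. X \<in> sets A \<and> Y \<in> sets B} \<subseteq> Pow (space A \<times> space B)"
    by (auto dest: sets.sets_into_space)
  show "sets mu = sigma_sets (space A \<times> space B) {X \<times> Y |X Y. X \<in> sets A \<and> Y \<in> sets B}"
    by (subst assms(2)) (rule sets_pair_measure)
  show "sets nu = sigma_sets (space A \<times> space B) {X \<times> Y |X Y. X \<in> sets A \<and> Y \<in> sets B}"
    by (subst assms(3)) (rule sets_pair_measure)
  show "emeasure mu Z = emeasure nu Z" if "Z \<in> {X \<times> Y |X Y. X \<in> sets A \<and> Y \<in> sets B}" for Z
    using that by (auto simp: rect)
  show "range (\<lambda>i::nat. space A \<times> space B) \<subseteq> {X \<times> Y |X Y. X \<in> sets A \<and> Y \<in> sets B}"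
    by blast
  show "(\<Union>i::nat. space A \<times> space B) = space A \<times> space B"
    by simp
  show "emeasure mu (space A \<times> space B) \<noteq> \<infinity>"
    using finite_measure.emeasure_finite[OF assms(1)] by simp
qed

lemma integral_indicator_fst_weighted_eq:
  fixes mu nu :: "('a \<times> real) measure" and g :: "real \<Rightarrow> real"
  assumes det: "determining_family A Phi"
    and "finite_measure mu" "finite_measure nu"
    and sets: "sets mu = sets (A \<Otimes>\<^sub>M borel)" "sets nu = sets (A \<Otimes>\<^sub>M borel)"
    and [measurable]: "g \<in> borel_measurable borel" and g: "\<And>y. 0 \<le> g y" "\<And>y. g y \<le> K"
    and moments: "\<And>i. (\<integral>x. Phi i (fst x) * g (snd x) \<partial>mu) = (\<integral>x. Phi i (fst x) * g (snd x) \<partial>nu)"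
    and B: "B \<in> sets A"
  shows "(\<integral>x. indicator B (fst x) * g (snd x) \<partial>mu) = (\<integral>x. indicator B (fst x) * g (snd x) \<partial>nu)"
proof -
  define marginal where
    "marginal M = distr (density M (\<lambda>x. ennreal (g (snd x)))) A fst" for M :: "('a \<times> real) measure"
  have integral_marginal: "(\<integral>a. f a \<partial>marginal M) = (\<integral>x. g (snd x) *\<^sub>R f (fst x) \<partial>M)"
    if "sets M = sets (A \<Otimes>\<^sub>M borel)" and [measurable]: "f \<in> borel_measurable A"
    for M and f :: "'a \<Rightarrow> 'c::{banach, second_countable_topology}"
    using that g(1) by (simp add: marginal_def integral_distr integral_density measurable_cong_sets[OF that(1) refl])
  have finite_marginal: "finite_measure (marginal M)"
    if "finite_measure M" "sets M = sets (A \<Otimes>\<^sub>M borel)" for M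
    unfolding marginal_def using that g
    by (intro finite_measure_distr_density) (auto simp: measurable_cong_sets[OF that(2) refl])
  have Phi [measurable]: "Phi i \<in> borel_measurable A" for i
    using det by (simp add: determining_family_def)
  have "(\<integral>a. Phi i a \<partial>marginal mu) = (\<integral>a. Phi i a \<partial>marginal nu)" for i
    using moments[of i] by (simp add: integral_marginal sets scaleR_conv_of_real mult.commute)
  moreover have "sets (marginal M) = sets A" for M
    by (simp add: marginal_def)
  ultimately have "marginal mu = marginal nu"
    using det finite_marginal \<open>finite_measure mu\<close> \<open>finite_measure nu\<close> sets
    unfolding determining_family_def by blast
  then show ?thesis
    using integral_marginal[OF sets(1), of "indicator B :: 'a \<Rightarrow> real"]
      integral_marginal[OF sets(2), of "indicator B :: 'a \<Rightarrow> real"] B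
    by (simp add: mult.commute)
qed

text \<open>The constant term is written as \<open>iexp (0 * snd x)\<close> so that all three terms on the right
  are moments of the form \<open>Phi i (fst x) * iexp (t * snd x)\<close>.\<close>

lemma integral_fst_mult_one_plus_cos:
  fixes M :: "('a \<times> real) measure" and f :: "'a \<Rightarrow> complex"
  assumes "finite_measure M" "sets M = sets (A \<Otimes>\<^sub>M borel)"
    and [measurable]: "f \<in> borel_measurable A" and f: "\<And>a. cmod (f a) \<le> 1"
  shows "(\<integral>x. f (fst x) * (1 + cos (t * snd x + c)) \<partial>M) =
    (\<integral>x. f (fst x) * iexp (0 * snd x) \<partial>M) +
    (iexp c * (\<integral>x. f (fst x) * iexp (t * snd x) \<partial>M) +
     iexp (- c) * (\<integral>x. f (fst x) * iexp (- t * snd x) \<partial>M)) / 2"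
proof -
  interpret finite_measure M by fact
  define F where "F s = (\<lambda>x. f (fst x) * iexp (s * snd x))" for s
  have integrable: "integrable M (F s)" for s
    unfolding F_def by (rule integrable_const_bound[where B = 1])
      (use f in \<open>auto simp: norm_mult measurable_cong_sets[OF assms(2) refl]\<close>)
  have cos_eq: "complex_of_real (cos (t * y + c)) =
      (iexp c * iexp (t * y) + iexp (- c) * iexp (- t * y)) / 2" for y
    by (simp add: cos_of_real[symmetric] cos_exp_eq exp_add[symmetric] algebra_simps)
  have "f (fst x) * (1 + cos (t * snd x + c)) = F 0 x + (iexp c * F t x + iexp (- c) * F (- t) x) / 2" for x
    by (simp only: F_def of_real_add of_real_1 cos_eq) (simp add: algebra_simps add_divide_distrib)
  then have "(\<integral>x. f (fst x) * (1 + cos (t * snd x + c)) \<partial>M) =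
      integral\<^sup>L M (F 0) + (iexp c * integral\<^sup>L M (F t) + iexp (- c) * integral\<^sup>L M (F (- t))) / 2"
    by (simp add: integrable Bochner_Integration.integral_add)
  then show ?thesis
    by (simp only: F_def)
qed

text \<open>Since \<open>cos (t y - pi / 2) = sin (t y)\<close>, the cosine integrals give the real and imaginary
  parts of the characteristic function of the slice \<open>C \<mapsto> mu (B \<times> C)\<close>.\<close>

lemma emeasure_Times_eqI_cos:
  fixes mu nu :: "('a \<times> real) measure"
  assumes "finite_measure mu" "finite_measure nu"
    and sets: "sets mu = sets (A \<Otimes>\<^sub>M borel)" "sets nu = sets (A \<Otimes>\<^sub>M borel)"
    and [measurable]: "B \<in> sets A" "C \<in> sets borel"
    and cos: "\<And>t c. (\<integral>x. indicator B (fst x) * cos (t * snd x + c) \<partial>mu) =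
      (\<integral>x. indicator B (fst x) * cos (t * snd x + c) \<partial>nu)"
  shows "emeasure mu (B \<times> C) = emeasure nu (B \<times> C)"
proof -
  define slice where
    "slice M = distr (density M (\<lambda>x. ennreal (indicator B (fst x)))) borel snd"
    for M :: "('a \<times> real) measure"
  have emeasure_slice: "emeasure (slice M) C = emeasure M (B \<times> C)"
    if "sets M = sets (A \<Otimes>\<^sub>M borel)" for M
  proof -
    have [measurable_cong]: "sets M = sets (A \<Otimes>\<^sub>M borel)" by fact
    have "space M = space A \<times> UNIV"
      using sets_eq_imp_space_eq[OF that] by (simp add: space_pair_measure)
    then have "emeasure (slice M) C = (\<integral>\<^sup>+x. indicator (B \<times> C) x \<partial>M)"
      by (auto simp: slice_def emeasure_distr emeasure_density indicator_def
          intro!: nn_integral_cong)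
    then show ?thesis
      by simp
  qed
  have char_slice: "(\<integral>y. iexp (t * y) \<partial>slice M) =
      Complex (\<integral>x. indicator B (fst x) * cos (t * snd x + 0) \<partial>M)
              (\<integral>x. indicator B (fst x) * cos (t * snd x + - (pi / 2)) \<partial>M)"
    if "finite_measure M" "sets M = sets (A \<Otimes>\<^sub>M borel)" for M t
  proof -
    interpret finite_measure M by fact
    have [measurable_cong]: "sets M = sets (A \<Otimes>\<^sub>M borel)" by fact
    have integrable: "integrable M (\<lambda>x. indicator B (fst x) *\<^sub>R iexp (t * snd x))"
      by (rule integrable_const_bound[where B = 1]) (auto simp: indicator_def)
    have "(\<integral>y. iexp (t * y) \<partial>slice M) = (\<integral>x. indicator B (fst x) *\<^sub>R iexp (t * snd x) \<partial>M)"
      by (simp add: slice_def integral_distr integral_density)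
    then show ?thesis
      using integral_Re[OF integrable] integral_Im[OF integrable]
      by (simp add: complex_eq_iff cos_diff Re_exp Im_exp)
  qed
  have finite_slice: "finite_measure (slice M)"
    if "finite_measure M" "sets M = sets (A \<Otimes>\<^sub>M borel)" for M
    unfolding slice_def using that
    by (intro finite_measure_distr_density[where K = 1]) (auto simp: measurable_cong_sets[OF that(2) refl])
  have "slice mu = slice nu"
  proof (rule finite_measure_eqI_char)
    show "(\<integral>y. iexp (t * y) \<partial>slice mu) = (\<integral>y. iexp (t * y) \<partial>slice nu)" for t
      using assms by (simp only: char_slice cos)
  qed (use assms finite_slice in \<open>auto simp: slice_def\<close>)
  then show ?thesis
    using emeasure_slice[OF sets(1)] emeasure_slice[OF sets(2)] by simp
qed

lemma integral_indicator_fst_one_plus_cos: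
  fixes M :: "('a \<times> real) measure"
  assumes "finite_measure M" "sets M = sets (A \<Otimes>\<^sub>M borel)" and [measurable]: "B \<in> sets A"
  shows "(\<integral>x. indicator B (fst x) * (1 + cos (t * snd x + c)) \<partial>M) =
    (\<integral>x. indicator B (fst x) \<partial>M) + (\<integral>x. indicator B (fst x) * cos (t * snd x + c) \<partial>M)"
proof -
  interpret finite_measure M by fact
  have [measurable_cong]: "sets M = sets (A \<Otimes>\<^sub>M borel)" by fact
  have "integrable M (\<lambda>x. indicator B (fst x) :: real)"
    by (rule integrable_const_bound[where B = 1]) (auto split: split_indicator)
  moreover have "integrable M (\<lambda>x. indicator B (fst x) * cos (t * snd x + c))"
  proof (rule integrable_const_bound[where B = 1])
    show "AE x in M. norm (indicator B (fst x) * cos (t * snd x + c)) \<le> 1"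
      by (simp add: abs_mult abs_cos_le_one real_norm_def split: split_indicator)
  qed measurable
  ultimately show ?thesis
    by (simp add: distrib_left Bochner_Integration.integral_add)
qed

text \<open>The weight \<open>1 + cos (t y + c)\<close> is nonnegative and a combination of characteristic
  exponentials, so the weighted first marginals of \<open>mu\<close> and \<open>nu\<close> have equal \<open>Phi\<close>-integrals.\<close>

lemma integral_indicator_fst_cos_eq:
  fixes mu nu :: "('a \<times> real) measure"
  assumes det: "determining_family A Phi"
    and finite: "finite_measure mu" "finite_measure nu"
    and sets: "sets mu = sets (A \<Otimes>\<^sub>M borel)" "sets nu = sets (A \<Otimes>\<^sub>M borel)"
    and moments: "\<And>i t. (\<integral>x. Phi i (fst x) * iexp (t * snd x) \<partial>mu) =
      (\<integral>x. Phi i (fst x) * iexp (t * snd x) \<partial>nu)"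
    and B: "B \<in> sets A"
  shows "(\<integral>x. indicator B (fst x) * cos (t * snd x + c) \<partial>mu) =
    (\<integral>x. indicator B (fst x) * cos (t * snd x + c) \<partial>nu)"
proof -
  have Phi: "Phi i \<in> borel_measurable A" and Phi_le: "cmod (Phi i a) \<le> 1" for i a
    using det by (simp_all add: determining_family_def)
  have weighted: "(\<integral>x. indicator B (fst x) * (1 + cos (t * snd x + c)) \<partial>mu) =
      (\<integral>x. indicator B (fst x) * (1 + cos (t * snd x + c)) \<partial>nu)" for t c
  proof (rule integral_indicator_fst_weighted_eq[OF det finite sets _ _ _ _ B, where K = 2])
    show "(\<integral>x. Phi i (fst x) * (1 + cos (t * snd x + c)) \<partial>mu) =
        (\<integral>x. Phi i (fst x) * (1 + cos (t * snd x + c)) \<partial>nu)" for i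
      by (simp only: integral_fst_mult_one_plus_cos[OF finite(1) sets(1) Phi Phi_le]
          integral_fst_mult_one_plus_cos[OF finite(2) sets(2) Phi Phi_le] moments)
    show "0 \<le> 1 + cos (t * y + c)" "1 + cos (t * y + c) \<le> 2" for y
      using cos_ge_minus_one[of "t * y + c"] cos_le_one[of "t * y + c"] by linarith+
  qed simp
  then show ?thesis
    using weighted[of 0 0] B
    by (simp add: integral_indicator_fst_one_plus_cos[OF finite(1) sets(1)]
        integral_indicator_fst_one_plus_cos[OF finite(2) sets(2)])
qed

lemma determining_family_pair:
  assumes det: "determining_family A Phi"
  shows "determining_family (A \<Otimes>\<^sub>M (borel :: real measure)) (\<lambda>(i, t) (a, y). Phi i a * iexp (t * y))"
proof -
  have [measurable]: "Phi i \<in> borel_measurable A" and Phi_le: "cmod (Phi i a) \<le> 1" for i a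
    using det by (simp_all add: determining_family_def)
  have eq: "mu = nu"
    if "finite_measure mu" "finite_measure nu"
      and sets: "sets mu = sets (A \<Otimes>\<^sub>M borel)" "sets nu = sets (A \<Otimes>\<^sub>M borel)"
      and "\<And>i t. (\<integral>x. Phi i (fst x) * iexp (t * snd x) \<partial>mu) =
        (\<integral>x. Phi i (fst x) * iexp (t * snd x) \<partial>nu)"
    for mu nu :: "('a \<times> real) measure"
  proof (rule measure_eqI_pair_rectangles[OF \<open>finite_measure mu\<close> sets])
    fix B C assume "B \<in> sets A" "C \<in> sets (borel :: real measure)"
    then show "emeasure mu (B \<times> C) = emeasure nu (B \<times> C)"
      using that by (intro emeasure_Times_eqI_cos integral_indicator_fst_cos_eq[OF det])
  qed
  show ?thesis
    using Phi_le by (auto simp: determining_family_def norm_mult split_beta' intro!: eq)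
qed

section \<open>Independence and conditional variance\<close>

lemma integral_pair_measure_mult:
  fixes f :: "'a \<Rightarrow> 'c::{real_normed_field, banach, second_countable_topology}"
  assumes "prob_space A" "prob_space B"
    and [measurable]: "f \<in> borel_measurable A" and f: "\<And>x. norm (f x) \<le> 1"
    and g: "integrable B g"
  shows "(\<integral>p. f (fst p) * g (snd p) \<partial>(A \<Otimes>\<^sub>M B)) = (\<integral>x. f x \<partial>A) * (\<integral>y. g y \<partial>B)"
proof -
  interpret pair_prob_space A B
    using assms(1,2) by (simp add: pair_prob_space_def pair_sigma_finite_def prob_space_imp_sigma_finite)
  have [measurable]: "g \<in> borel_measurable B"
    using g by simp
  have "integrable A (\<lambda>x. norm (f x) * (\<integral>y. norm (g y) \<partial>B))"
    using f by (intro M1.integrable_const_bound[where B = "\<integral>y. norm (g y) \<partial>B"])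
      (auto intro!: mult_left_le_one_le integral_nonneg_AE)
  then have "integrable (A \<Otimes>\<^sub>M B) (\<lambda>p. f (fst p) * g (snd p))"
    using g by (intro Fubini_integrable) (auto simp: norm_mult)
  then have "(\<integral>p. f (fst p) * g (snd p) \<partial>(A \<Otimes>\<^sub>M B)) = (\<integral>x. (\<integral>y. f x * g y \<partial>B) \<partial>A)"
    by (simp add: integral_fst'[symmetric])
  then show ?thesis
    by simp
qed

lemma (in prob_space) distr_pair_eq_pair_measure_if_char_factors:
  fixes W :: "'a \<Rightarrow> 'b" and R :: "'a \<Rightarrow> real" and Phi :: "'i \<Rightarrow> 'b \<Rightarrow> complex"
  assumes det: "determining_family S Phi"
    and [measurable]: "W \<in> M \<rightarrow>\<^sub>M S" "R \<in> borel_measurable M"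
    and factor: "\<And>i t. (\<integral>w. Phi i (W w) * iexp (t * R w) \<partial>M) =
      (\<integral>w. Phi i (W w) \<partial>M) * (\<integral>w. iexp (t * R w) \<partial>M)"
  shows "distr M (S \<Otimes>\<^sub>M borel) (\<lambda>w. (W w, R w)) = distr M S W \<Otimes>\<^sub>M distr M borel R"
proof -
  have Phi [measurable]: "Phi i \<in> borel_measurable S" and Phi_le: "cmod (Phi i a) \<le> 1" for i a
    using det by (simp_all add: determining_family_def)
  have laws: "prob_space (distr M S W)" "prob_space (distr M borel R)"
    by (simp_all add: prob_space_distr)
  show ?thesis
  proof (rule determining_family_pair[OF det, unfolded determining_family_def, THEN conjunct2, rule_format])
    show "finite_measure (distr M (S \<Otimes>\<^sub>M borel) (\<lambda>w. (W w, R w)))"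
      by (simp add: prob_space_distr prob_space.axioms(1))
    show "finite_measure (distr M S W \<Otimes>\<^sub>M distr M borel R)"
      using laws by (simp add: prob_space_pair prob_space.axioms(1))
    show "sets (distr M S W \<Otimes>\<^sub>M distr M borel R) = sets (S \<Otimes>\<^sub>M borel)"
      by (rule sets_pair_measure_cong) simp_all
    fix p :: "'i \<times> real"
    obtain i t where p: "p = (i, t)"
      by force
    have "(\<integral>x. Phi i (fst x) * iexp (t * snd x) \<partial>distr M (S \<Otimes>\<^sub>M borel) (\<lambda>w. (W w, R w))) =
        (\<integral>w. Phi i (W w) \<partial>M) * (\<integral>w. iexp (t * R w) \<partial>M)"
      using factor[of i t] by (simp add: integral_distr)
    also have "\<dots> = (\<integral>a. Phi i a \<partial>distr M S W) * (\<integral>y. iexp (t * y) \<partial>distr M borel R)"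
      by (simp add: integral_distr)
    also have "\<dots> = (\<integral>x. Phi i (fst x) * iexp (t * snd x) \<partial>(distr M S W \<Otimes>\<^sub>M distr M borel R))"
    proof (rule integral_pair_measure_mult[symmetric, OF laws])
      show "Phi i \<in> borel_measurable (distr M S W)"
        by simp
      show "norm (Phi i a) \<le> 1" for a
        by (rule Phi_le)
      show "integrable (distr M borel R) (\<lambda>y. iexp (t * y))"
        by (rule finite_measure.integrable_const_bound[where B = 1, OF prob_space.axioms(1)[OF laws(2)]])
          simp_all
    qed
    finally show "(\<integral>x. (case p of (i, t) \<Rightarrow> \<lambda>(a, y). Phi i a * iexp (t * y)) x
        \<partial>distr M (S \<Otimes>\<^sub>M borel) (\<lambda>w. (W w, R w))) =
      (\<integral>x. (case p of (i, t) \<Rightarrow> \<lambda>(a, y). Phi i a * iexp (t * y)) x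
        \<partial>(distr M S W \<Otimes>\<^sub>M distr M borel R))"
      by (simp add: p split_beta')
  qed simp
qed

lemma (in prob_space) finite_measure_subalgebra_sigma_rv:
  assumes "W \<in> borel_measurable M"
  shows "finite_measure_subalgebra M (sigma_rv M W)"
proof unfold_locales
  show "subalgebra M (sigma_rv M W)"
    using assms by (simp add: subalgebra_def sigma_rv_def sets_image_in_sets)
qed

lemma (in prob_space) real_cond_exp_indep_law:
  fixes W :: "'a \<Rightarrow> 'b::topological_space" and R :: "'a \<Rightarrow> real"
  assumes [measurable]: "W \<in> borel_measurable M" "R \<in> borel_measurable M"
    and law: "distr M (borel \<Otimes>\<^sub>M borel) (\<lambda>w. (W w, R w)) = distr M borel W \<Otimes>\<^sub>M distr M borel R"
    and [measurable]: "h \<in> borel_measurable borel" and integrable: "integrable M (\<lambda>w. h (R w))"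
  shows "AE w in M. real_cond_exp M (sigma_rv M W) (\<lambda>w. h (R w)) w = expectation (\<lambda>w. h (R w))"
proof -
  interpret finite_measure_subalgebra M "sigma_rv M W"
    by (rule finite_measure_subalgebra_sigma_rv) measurable
  show ?thesis
  proof (rule real_cond_exp_charact)
    fix A assume "A \<in> sets (sigma_rv M W)"
    then obtain B where [measurable]: "B \<in> sets borel" and A: "A = W -` B \<inter> space M"
      by (auto simp: sigma_rv_def sets_vimage_algebra2)
    have "(\<integral>w. indicator B (W w) * h (R w) \<partial>M) =
        (\<integral>p. indicator B (fst p) * h (snd p) \<partial>(distr M borel W \<Otimes>\<^sub>M distr M borel R))"
      by (simp add: law[symmetric] integral_distr)
    also have "\<dots> = (\<integral>x. indicator B x \<partial>distr M borel W) * (\<integral>y. h y \<partial>distr M borel R)"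
      using integrable
      by (intro integral_pair_measure_mult) (simp_all add: prob_space_distr integrable_distr_eq)
    also have "\<dots> = (\<integral>w. indicator B (W w) \<partial>M) * expectation (\<lambda>w. h (R w))"
      using integral_distr[of W M borel "indicator B :: 'b \<Rightarrow> real"] integral_distr[of R M borel h]
      by (simp del: integral_indicator)
    finally show "(\<integral>w\<in>A. h (R w) \<partial>M) = (\<integral>w\<in>A. expectation (\<lambda>w. h (R w)) \<partial>M)"
      unfolding A set_lebesgue_integral_def
      by (simp add: indicator_def mult.commute cong: Bochner_Integration.integral_cong)
  qed (simp_all add: integrable)
qed

lemma (in prob_space) cond_var_add_indep_law:
  fixes W :: "'a \<Rightarrow> 'b::topological_space" and R X :: "'a \<Rightarrow> real"
  assumes [measurable]: "W \<in> borel_measurable M" "R \<in> borel_measurable M"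
    and law: "distr M (borel \<Otimes>\<^sub>M borel) (\<lambda>w. (W w, R w)) = distr M borel W \<Otimes>\<^sub>M distr M borel R"
    and "integrable M R" "integrable M (\<lambda>w. (R w)\<^sup>2)" "integrable M X"
    and [measurable]: "g \<in> borel_measurable borel" and X: "\<And>w. X w = g (W w) + R w"
  shows "AE w in M. cond_var M (sigma_rv M W) X w = variance R"
proof -
  interpret finite_measure_subalgebra M "sigma_rv M W"
    by (rule finite_measure_subalgebra_sigma_rv) measurable
  have integrable_gW: "integrable M (\<lambda>w. g (W w))"
    using Bochner_Integration.integrable_diff[OF \<open>integrable M X\<close> \<open>integrable M R\<close>] by (simp add: X)
  have "(\<lambda>w. g (W w)) \<in> borel_measurable (sigma_rv M W)"
    by (auto simp: sigma_rv_def intro!: measurable_compose[OF measurable_vimage_algebra1])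
  then have "AE w in M. real_cond_exp M (sigma_rv M W) X w = g (W w) + expectation R"
    using real_cond_exp_add[OF integrable_gW \<open>integrable M R\<close>]
      real_cond_exp_F_meas[OF integrable_gW]
      real_cond_exp_indep_law[OF assms(1,2) law, of "\<lambda>r. r"] \<open>integrable M R\<close>
    by (auto simp: X[abs_def])
  then have "AE w in M. (X w - real_cond_exp M (sigma_rv M W) X w)\<^sup>2 = (R w - expectation R)\<^sup>2"
    by eventually_elim (simp add: X)
  then have "AE w in M. cond_var M (sigma_rv M W) X w =
      real_cond_exp M (sigma_rv M W) (\<lambda>w. (R w - expectation R)\<^sup>2) w"
    unfolding cond_var_def by (rule real_cond_exp_cong) (use assms in measurable)
  moreover have "integrable M (\<lambda>w. (R w - expectation R)\<^sup>2)"
    using assms(4,5) by (simp add: power2_diff)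
  ultimately show ?thesis
    using real_cond_exp_indep_law[OF assms(1,2) law, of "\<lambda>r. (r - expectation R)\<^sup>2"] by auto
qed

section \<open>The noising model\<close>

lemma (in subprob_space) norm_integral_le_const:
  fixes f :: "'a \<Rightarrow> 'b::{banach, second_countable_topology}"
  assumes "f \<in> borel_measurable M" "\<And>x. norm (f x) \<le> B"
  shows "norm (integral\<^sup>L M f) \<le> B"
proof -
  have "0 \<le> B"
    using norm_ge_zero assms(2) order_trans by blast
  have "ennreal (norm (integral\<^sup>L M f)) \<le> (\<integral>\<^sup>+x. norm (f x) \<partial>M)"
    using assms by (intro integral_norm_bound_ennreal integrable_const_bound[where B = B]) simp_all
  also have "\<dots> \<le> ennreal B"
    using assms \<open>0 \<le> B\<close> by (intro nn_integral_le_const) simp_all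
  finally show ?thesis
    using \<open>0 \<le> B\<close> by simp
qed

lemma integral_bind_complex:
  fixes f :: "'b \<Rightarrow> complex"
  assumes [measurable]: "f \<in> borel_measurable K" and f: "\<And>y. cmod (f y) \<le> B"
    and N [measurable]: "N \<in> M \<rightarrow>\<^sub>M subprob_algebra K" and "prob_space M"
  shows "(\<integral>y. f y \<partial>(M \<bind> N)) = (\<integral>x. (\<integral>y. f y \<partial>N x) \<partial>M)"
proof -
  interpret M: prob_space M by fact
  have integrable_N: "integrable (N x) f" and norm_le: "norm (\<integral>y. f y \<partial>N x) \<le> B"
    if "x \<in> space M" for x
  proof -
    interpret subprob_space "N x"
      using subprob_space_kernel[OF N that] .
    have "f \<in> borel_measurable (N x)"
      by (simp add: measurable_cong_sets[OF sets_kernel[OF N that] refl])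
    then show "integrable (N x) f" "norm (\<integral>y. f y \<partial>N x) \<le> B"
      using f by (simp_all add: integrable_const_bound[where B = B] norm_integral_le_const)
  qed
  have integrable_M: "integrable M (\<lambda>x. \<integral>y. f y \<partial>N x)"
    using norm_le by (intro M.integrable_const_bound[where B = B]) simp_all
  interpret bind: subprob_space "M \<bind> N"
    by (rule subprob_space_bind[OF prob_space_imp_subprob_space[OF assms(4)] N])
  have "sets (M \<bind> N) = sets K"
    using M.not_empty by (simp add: sets_kernel[OF N])
  then have integrable_bind: "integrable (M \<bind> N) f"
    using f by (intro bind.integrable_const_bound[where B = B])
      (simp_all add: measurable_cong_sets[OF \<open>sets (M \<bind> N) = sets K\<close> refl])
  have component: "T (\<integral>y. f y \<partial>(M \<bind> N)) = T (\<integral>x. (\<integral>y. f y \<partial>N x) \<partial>M)"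
    if T: "bounded_linear T" "\<And>z. \<bar>T z\<bar> \<le> cmod z" for T :: "complex \<Rightarrow> real"
  proof -
    interpret bounded_linear T by fact
    have [measurable]: "T \<in> borel_measurable borel"
      by (simp add: borel_measurable_continuous_onI linear_continuous_on \<open>bounded_linear T\<close>)
    have "T (\<integral>y. f y \<partial>(M \<bind> N)) = (\<integral>y. T (f y) \<partial>(M \<bind> N))"
      by (rule integral_bounded_linear[OF T(1) integrable_bind, symmetric])
    also have "\<dots> = (\<integral>x. (\<integral>y. T (f y) \<partial>N x) \<partial>M)"
    proof (rule integral_bind[where K = K and B = B and B' = 1])
      show "\<bar>T (f y)\<bar> \<le> B" for y
        using order_trans[OF T(2) f] .
      show "AE x in M. emeasure (N x) (space (N x)) \<le> ennreal 1"
        by (auto intro!: AE_I2 subprob_space.subprob_emeasure_le_1 subprob_space_kernel[OF N])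
    qed (simp_all add: M.finite_measure_axioms)
    also have "\<dots> = (\<integral>x. T (\<integral>y. f y \<partial>N x) \<partial>M)"
      by (intro Bochner_Integration.integral_cong refl integral_bounded_linear[OF T(1) integrable_N])
    also have "\<dots> = T (\<integral>x. (\<integral>y. f y \<partial>N x) \<partial>M)"
      by (rule integral_bounded_linear[OF T(1) integrable_M])
    finally show ?thesis .
  qed
  show ?thesis
    using component[OF bounded_linear_Re abs_Re_le_cmod] component[OF bounded_linear_Im abs_Im_le_cmod]
    by (simp add: complex_eq_iff)
qed

lemma quadratic_form_nonneg:
  fixes a b rho :: real
  assumes "\<bar>rho\<bar> \<le> 1"
  shows "0 \<le> a\<^sup>2 + 2 * a * b * rho + b\<^sup>2"
proof -
  have "a\<^sup>2 + 2 * a * b * rho + b\<^sup>2 = (a + b * rho)\<^sup>2 + b\<^sup>2 * (1 - rho\<^sup>2)"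
    by algebra
  moreover have "rho\<^sup>2 \<le> 1"
    using assms by (simp add: abs_square_le_1)
  ultimately show ?thesis
    by simp
qed

text \<open>\<open>a\<close> and \<open>b\<close> are the least-squares coefficients of \<open>XSt\<close> on \<open>(XSt1, XM0)\<close>, with
  \<open>s = Cov (XSt, XSt1)\<close>, \<open>k = Cov (XSt, XM0)\<close> and \<open>s k = Cov (XSt1, XM0)\<close>; the left-hand side of
  the last claim is the residual variance, equal to \<open>beta (1 - k\<^sup>2) / (1 - s\<^sup>2 k\<^sup>2)\<close>.\<close>

lemma regression_residual_variance_le:
  fixes s k beta :: real
  assumes s: "s\<^sup>2 = 1 - beta" and "0 < beta" and "k\<^sup>2 < 1"
  defines "a \<equiv> s * (1 - k\<^sup>2) / (1 - s\<^sup>2 * k\<^sup>2)" and "b \<equiv> k * beta / (1 - s\<^sup>2 * k\<^sup>2)"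
  shows "s - a - b * k * s = 0" and "k - b - a * k * s = 0"
    and "1 + a\<^sup>2 + b\<^sup>2 + 2 * (k * s * a * b - k * b - s * a) \<le> beta * (1 - beta * k\<^sup>2)"
proof -
  define D where "D = 1 - s\<^sup>2 * k\<^sup>2"
  have "s\<^sup>2 * k\<^sup>2 \<le> 1 * k\<^sup>2"
    using s \<open>0 < beta\<close> by (intro mult_right_mono) simp_all
  then have "0 < D"
    using \<open>k\<^sup>2 < 1\<close> by (simp add: D_def)
  have a: "a * D = s * (1 - k\<^sup>2)" and b: "b * D = k * beta"
    using \<open>0 < D\<close> by (simp_all add: a_def b_def D_def)
  have "(s - a - b * k * s) * D = 0" "(k - b - a * k * s) * D = 0"
    using a b s unfolding D_def by algebra+
  with \<open>0 < D\<close> show s_eq: "s - a - b * k * s = 0" and k_eq: "k - b - a * k * s = 0"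
    by simp_all
  have "1 + a\<^sup>2 + b\<^sup>2 + 2 * (k * s * a * b - k * b - s * a) =
      1 - s * a - k * b - a * (s - a - b * k * s) - b * (k - b - a * k * s)"
    by (simp add: power2_eq_square algebra_simps)
  also have "\<dots> = 1 - s * a - k * b"
    by (simp add: s_eq k_eq)
  also have "\<dots> = beta * (1 - k\<^sup>2) / D"
    using a b s \<open>0 < D\<close> by (simp add: field_simps D_def) algebra
  also have "\<dots> \<le> beta * (1 - beta * k\<^sup>2)"
  proof -
    have "beta * (1 - beta * k\<^sup>2) * D - beta * (1 - k\<^sup>2) = beta\<^sup>2 * s\<^sup>2 * (k\<^sup>2)\<^sup>2"
      using s unfolding D_def by algebra
    then have "beta * (1 - k\<^sup>2) \<le> beta * (1 - beta * k\<^sup>2) * D"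
      by (smt (verit) zero_le_power2 mult_nonneg_nonneg)
    with \<open>0 < D\<close> show ?thesis
      by (simp add: divide_le_eq)
  qed
  finally show "1 + a\<^sup>2 + b\<^sup>2 + 2 * (k * s * a * b - k * b - s * a) \<le> beta * (1 - beta * k\<^sup>2)" .
qed

locale noised_bivariate_normal = prob_space M for M :: "'a measure" +
  fixes XM0 XS0 XSt XSt1 :: "'a \<Rightarrow> real" and rho alpha beta :: real
  assumes bivariate: "std_bivariate_normal M XM0 XS0 rho"
    and XSt_measurable [measurable]: "XSt \<in> borel_measurable M"
    and XSt1_measurable [measurable]: "XSt1 \<in> borel_measurable M"
    and alpha: "0 < alpha" "alpha < 1" and beta: "0 < beta" "beta < 1"
    and joint_law: "distr M borel (\<lambda>w. (XM0 w, XS0 w, XSt w, XSt1 w)) =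
      distr M borel (\<lambda>w. (XM0 w, XS0 w)) \<bind>
        (\<lambda>(m, s). normal_measure (sqrt alpha * s) (1 - alpha) \<bind>
          (\<lambda>x. normal_measure (sqrt (1 - beta) * x) beta \<bind>
            (\<lambda>y. return borel (m, s, x, y))))"
begin

lemma XM0_measurable [measurable]: "XM0 \<in> borel_measurable M"
  and XS0_measurable [measurable]: "XS0 \<in> borel_measurable M"
  and abs_rho_le_1: "\<bar>rho\<bar> \<le> 1"
  and distr_bivariate: "distr M borel (\<lambda>w. a * XM0 w + b * XS0 w) = normal_measure 0 (a\<^sup>2 + 2 * a * b * rho + b\<^sup>2)"
  using bivariate by (simp_all add: std_bivariate_normal_def)

lemma char_bivariate:
  "(\<integral>w. iexp (a * XM0 w + b * XS0 w) \<partial>M) = exp (- (a\<^sup>2 + 2 * a * b * rho + b\<^sup>2) / 2)"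
proof -
  have "(\<integral>w. iexp (a * XM0 w + b * XS0 w) \<partial>M) =
      (\<integral>z. iexp (0 + 1 * z) \<partial>distr M borel (\<lambda>w. a * XM0 w + b * XS0 w))"
    by (simp add: integral_distr)
  also have "\<dots> = exp (- (a\<^sup>2 + 2 * a * b * rho + b\<^sup>2) / 2)"
    using quadratic_form_nonneg[OF abs_rho_le_1, of a b]
    by (simp only: distr_bivariate integral_iexp_normal_measure) simp
  finally show ?thesis .
qed

text \<open>The variance of \<open>a XM0 + b XS0 + c XSt + d XSt1\<close>: the covariances are \<open>rho\<close> along
  \<open>XM0 - XS0\<close>, \<open>sqrt alpha\<close> along \<open>XS0 - XSt\<close>, \<open>sqrt (1 - beta)\<close> along \<open>XSt - XSt1\<close>, and
  products along this chain.\<close>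

definition lin_var :: "real \<Rightarrow> real \<Rightarrow> real \<Rightarrow> real \<Rightarrow> real" where
  "lin_var a b c d = a\<^sup>2 + b\<^sup>2 + c\<^sup>2 + d\<^sup>2 +
     2 * (rho * a * b + sqrt alpha * rho * a * c + sqrt alpha * sqrt (1 - beta) * rho * a * d +
          sqrt alpha * b * c + sqrt alpha * sqrt (1 - beta) * b * d + sqrt (1 - beta) * c * d)"

lemma integral_iexp_noising:
  "(\<integral>p. (case p of (m', s', x, y) \<Rightarrow> iexp (a * m' + b * s' + c * x + d * y))
     \<partial>(normal_measure (sqrt alpha * s) (1 - alpha) \<bind>
        (\<lambda>x. normal_measure (sqrt (1 - beta) * x) beta \<bind> (\<lambda>y. return borel (m, s, x, y))))) =
   iexp (a * m + (b + (c + d * sqrt (1 - beta)) * sqrt alpha) * s) *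
   exp (- (d\<^sup>2 * beta + (c + d * sqrt (1 - beta))\<^sup>2 * (1 - alpha)) / 2)"
  (is "integral\<^sup>L (_ \<bind> ?K) ?f = _")
proof -
  have tuple [measurable]: "(\<lambda>(x, y). (m, s, x, y)) \<in> borel \<Otimes>\<^sub>M borel \<rightarrow>\<^sub>M (borel :: (real \<times> real \<times> real \<times> real) measure)"
    unfolding borel_prod[symmetric] by measurable
  have f [measurable]: "?f \<in> borel_measurable borel"
    unfolding borel_prod[symmetric] by measurable
  have tuple_x: "(\<lambda>y. (m, s, x, y)) \<in> normal_measure mu v \<rightarrow>\<^sub>M borel" for x mu v :: real
    using measurable_Pair2[OF tuple, of x] by (simp add: measurable_cong_sets[OF sets_normal_measure refl])
  have K: "?K x = distr (normal_measure (sqrt (1 - beta) * x) beta) borel (\<lambda>y. (m, s, x, y))" for x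
    using tuple_x by (intro bind_return_distr') simp_all
  have K_measurable: "?K \<in> borel \<rightarrow>\<^sub>M subprob_algebra borel"
    unfolding borel_prod[symmetric] by measurable
  have "integral\<^sup>L (normal_measure (sqrt alpha * s) (1 - alpha) \<bind> ?K) ?f =
      (\<integral>x. integral\<^sup>L (?K x) ?f \<partial>normal_measure (sqrt alpha * s) (1 - alpha))"
    using alpha K_measurable
    by (intro integral_bind_complex[where B = 1 and K = borel] prob_space_normal_measure f)
      (simp_all add: measurable_cong_sets[OF sets_normal_measure refl] split: prod.split)
  also have "\<dots> = (\<integral>x. exp (- d\<^sup>2 * beta / 2) * iexp ((a * m + b * s) + (c + d * sqrt (1 - beta)) * x)
      \<partial>normal_measure (sqrt alpha * s) (1 - alpha))"
  proof (rule Bochner_Integration.integral_cong[OF refl])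
    fix x
    have "integral\<^sup>L (?K x) ?f =
        (\<integral>y. iexp ((a * m + b * s + c * x) + d * y) \<partial>normal_measure (sqrt (1 - beta) * x) beta)"
      unfolding K by (subst integral_distr[OF tuple_x f]) simp
    also have "\<dots> = iexp ((a * m + b * s + c * x) + d * (sqrt (1 - beta) * x)) * exp (- d\<^sup>2 * beta / 2)"
      using beta by (intro integral_iexp_normal_measure) simp
    also have "\<dots> = exp (- d\<^sup>2 * beta / 2) * iexp ((a * m + b * s) + (c + d * sqrt (1 - beta)) * x)"
      by (simp add: algebra_simps)
    finally show "integral\<^sup>L (?K x) ?f = \<dots>" .
  qed
  also have "\<dots> = exp (- d\<^sup>2 * beta / 2) *
      (iexp ((a * m + b * s) + (c + d * sqrt (1 - beta)) * (sqrt alpha * s)) *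
       exp (- (c + d * sqrt (1 - beta))\<^sup>2 * (1 - alpha) / 2))"
    using alpha by (subst integral_mult_right_zero, subst integral_iexp_normal_measure) simp_all
  also have "\<dots> = iexp (a * m + (b + (c + d * sqrt (1 - beta)) * sqrt alpha) * s) *
      exp (- (d\<^sup>2 * beta + (c + d * sqrt (1 - beta))\<^sup>2 * (1 - alpha)) / 2)"
    by (simp add: algebra_simps add_divide_distrib diff_divide_distrib flip: of_real_mult exp_add)
  finally show ?thesis .
qed

text \<open>The form in which the variance arises by integrating out \<open>XSt1\<close>, then \<open>XSt\<close>, then
  \<open>(XM0, XS0)\<close>.\<close>

lemma lin_var_eq_nested:
  "lin_var a b c d = d\<^sup>2 * beta + (c + d * sqrt (1 - beta))\<^sup>2 * (1 - alpha) +
     (a\<^sup>2 + 2 * a * (b + (c + d * sqrt (1 - beta)) * sqrt alpha) * rho + (b + (c + d * sqrt (1 - beta)) * sqrt alpha)\<^sup>2)"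
proof -
  define r q where "r = sqrt alpha" and "q = sqrt (1 - beta)"
  have alpha_eq: "alpha = r\<^sup>2" and beta_eq: "beta = 1 - q\<^sup>2"
    using alpha beta by (simp_all add: r_def q_def)
  have "lin_var a b c d = a\<^sup>2 + b\<^sup>2 + c\<^sup>2 + d\<^sup>2 +
      2 * (rho * a * b + r * rho * a * c + r * q * rho * a * d + r * b * c + r * q * b * d + q * c * d)"
    by (simp add: lin_var_def r_def q_def)
  also have "\<dots> = d\<^sup>2 * beta + (c + d * q)\<^sup>2 * (1 - alpha) +
      (a\<^sup>2 + 2 * a * (b + (c + d * q) * r) * rho + (b + (c + d * q) * r)\<^sup>2)"
    by (simp add: alpha_eq beta_eq power2_eq_square algebra_simps)
  finally show ?thesis
    by (simp add: r_def q_def)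
qed

lemma char_lin:
  "(\<integral>w. iexp (a * XM0 w + b * XS0 w + c * XSt w + d * XSt1 w) \<partial>M) = exp (- lin_var a b c d / 2)"
proof -
  define b' where "b' = b + (c + d * sqrt (1 - beta)) * sqrt alpha"
  define C where "C = exp (- (d\<^sup>2 * beta + (c + d * sqrt (1 - beta))\<^sup>2 * (1 - alpha)) / 2)"
  let ?f = "\<lambda>(m, s, x, y). iexp (a * m + b * s + c * x + d * y)"
  let ?kernel = "\<lambda>(m :: real, s). normal_measure (sqrt alpha * s) (1 - alpha) \<bind>
    (\<lambda>x. normal_measure (sqrt (1 - beta) * x) beta \<bind> (\<lambda>y. return borel (m, s, x, y)))"
  have joint [measurable]: "(\<lambda>w. (XM0 w, XS0 w, XSt w, XSt1 w)) \<in> borel_measurable M"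
    and initial [measurable]: "(\<lambda>w. (XM0 w, XS0 w)) \<in> borel_measurable M"
    and f [measurable]: "?f \<in> borel_measurable borel"
    unfolding borel_prod[symmetric] by measurable
  have kernel: "?kernel \<in> borel \<rightarrow>\<^sub>M subprob_algebra borel"
    by (subst (1) borel_prod[symmetric]) measurable
  have "(\<integral>w. iexp (a * XM0 w + b * XS0 w + c * XSt w + d * XSt1 w) \<partial>M) =
      integral\<^sup>L (distr M borel (\<lambda>w. (XM0 w, XS0 w, XSt w, XSt1 w))) ?f"
    by (subst integral_distr[OF joint f]) simp
  also have "\<dots> = (\<integral>p. integral\<^sup>L (?kernel p) ?f \<partial>distr M borel (\<lambda>w. (XM0 w, XS0 w)))"
    unfolding joint_law using kernel
    by (intro integral_bind_complex[where B = 1 and K = borel] prob_space_distr f)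
      (simp_all split: prod.split)
  also have "\<dots> = (\<integral>p. C * iexp (a * fst p + b' * snd p) \<partial>distr M borel (\<lambda>w. (XM0 w, XS0 w)))"
  proof (rule Bochner_Integration.integral_cong[OF refl])
    fix p :: "real \<times> real"
    obtain m s where p: "p = (m, s)"
      by fastforce
    show "integral\<^sup>L (?kernel p) ?f = C * iexp (a * fst p + b' * snd p)"
      unfolding p by (simp only: case_prod_conv integral_iexp_noising fst_conv snd_conv)
        (simp add: C_def b'_def mult.commute)
  qed
  also have "\<dots> = (\<integral>w. C * iexp (a * XM0 w + b' * XS0 w) \<partial>M)"
  proof -
    have "(\<lambda>p. C * iexp (a * fst p + b' * snd p)) \<in> borel_measurable (borel :: (real \<times> real) measure)"
      unfolding borel_prod[symmetric] by measurable
    from integral_distr[OF initial this] show ?thesis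
      by simp
  qed
  also have "\<dots> = C * exp (- (a\<^sup>2 + 2 * a * b' * rho + b'\<^sup>2) / 2)"
    by (simp only: integral_mult_right_zero char_bivariate of_real_mult)
  also have "\<dots> = exp (- lin_var a b c d / 2)"
    by (simp add: C_def b'_def lin_var_eq_nested add_divide_distrib diff_divide_distrib flip: of_real_mult exp_add)
  finally show ?thesis .
qed

lemma char_lin_cong:
  assumes "\<And>w. f w = a * XM0 w + b * XS0 w + c * XSt w + d * XSt1 w"
  shows "(\<integral>w. iexp (f w) \<partial>M) = exp (- lin_var a b c d / 2)"
  by (simp only: assms char_lin)

lemma lin_var_nonneg: "0 \<le> lin_var a b c d"
proof -
  have "norm (\<integral>w. iexp (a * XM0 w + b * XS0 w + c * XSt w + d * XSt1 w) \<partial>M) \<le>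
      (\<integral>w. norm (iexp (a * XM0 w + b * XS0 w + c * XSt w + d * XSt1 w)) \<partial>M)"
    by (rule integral_norm_bound)
  then have "norm (\<integral>w. iexp (a * XM0 w + b * XS0 w + c * XSt w + d * XSt1 w) \<partial>M) \<le> 1"
    by (simp add: prob_space)
  then show ?thesis
    by (simp only: char_lin) simp
qed

lemma distr_lin:
  "distr M borel (\<lambda>w. a * XM0 w + b * XS0 w + c * XSt w + d * XSt1 w) = normal_measure 0 (lin_var a b c d)"
proof (rule finite_measure_eqI_char)
  show "finite_measure (distr M borel (\<lambda>w. a * XM0 w + b * XS0 w + c * XSt w + d * XSt1 w))"
    "finite_measure (normal_measure 0 (lin_var a b c d))"
    by (simp_all add: prob_space_distr prob_space_normal_measure lin_var_nonneg prob_space.axioms(1))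
  fix t
  define L where "L w = a * XM0 w + b * XS0 w + c * XSt w + d * XSt1 w" for w
  have [measurable]: "L \<in> borel_measurable M"
    unfolding L_def by measurable
  have "lin_var (t * a) (t * b) (t * c) (t * d) = t\<^sup>2 * lin_var a b c d"
    by (simp add: lin_var_def power2_eq_square algebra_simps)
  moreover have "(\<integral>w. iexp (t * L w) \<partial>M) = exp (- lin_var (t * a) (t * b) (t * c) (t * d) / 2)"
    by (rule char_lin_cong) (simp add: L_def algebra_simps)
  ultimately have "(\<integral>x. iexp (t * x) \<partial>distr M borel L) = exp (- t\<^sup>2 * lin_var a b c d / 2)"
    using integral_distr[of L M borel "\<lambda>x. iexp (t * x)"] by simp
  also have "\<dots> = (\<integral>x. iexp (0 + t * x) \<partial>normal_measure 0 (lin_var a b c d))"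
    by (subst integral_iexp_normal_measure) (simp_all add: lin_var_nonneg)
  finally show "(\<integral>x. iexp (t * x) \<partial>distr M borel (\<lambda>w. a * XM0 w + b * XS0 w + c * XSt w + d * XSt1 w)) =
      (\<integral>x. iexp (t * x) \<partial>normal_measure 0 (lin_var a b c d))"
    by (simp add: L_def[abs_def])
qed simp_all

text \<open>The two brackets are the covariances of the residual \<open>XSt - a XSt1 - b XM0\<close> with \<open>XM0\<close>
  and with \<open>XSt1\<close>.\<close>

lemma char_factor_uncorrelated:
  assumes f: "\<And>w. f w = v * XM0 w + u * XSt1 w"
    and g: "\<And>w. g w = XSt w - a * XSt1 w - b * XM0 w"
    and uncorrelated:
      "v * (sqrt alpha * rho - b - a * (sqrt alpha * rho) * sqrt (1 - beta)) = 0"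
      "u * (sqrt (1 - beta) - a - b * (sqrt alpha * rho) * sqrt (1 - beta)) = 0"
  shows "(\<integral>w. iexp (f w) * iexp (t * g w) \<partial>M) = (\<integral>w. iexp (f w) \<partial>M) * (\<integral>w. iexp (t * g w) \<partial>M)"
proof -
  have split: "lin_var (v - t * b) 0 t (u - t * a) = lin_var v 0 0 u + lin_var (- (t * b)) 0 t (- (t * a)) +
      2 * t * (v * (sqrt alpha * rho - b - a * (sqrt alpha * rho) * sqrt (1 - beta)) +
               u * (sqrt (1 - beta) - a - b * (sqrt alpha * rho) * sqrt (1 - beta)))"
    by (simp add: lin_var_def power2_eq_square algebra_simps)
  have "(\<integral>w. iexp (f w) * iexp (t * g w) \<partial>M) = exp (- lin_var (v - t * b) 0 t (u - t * a) / 2)"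
    by (simp only: exp_add[symmetric] distrib_left[symmetric] of_real_add[symmetric])
      (rule char_lin_cong, simp add: f g algebra_simps)
  also have "\<dots> = exp (- lin_var v 0 0 u / 2) * exp (- lin_var (- (t * b)) 0 t (- (t * a)) / 2)"
    by (simp only: split uncorrelated) (simp add: add_divide_distrib flip: exp_add of_real_mult)
  also have "\<dots> = (\<integral>w. iexp (f w) \<partial>M) * (\<integral>w. iexp (t * g w) \<partial>M)"
  proof -
    have "(\<integral>w. iexp (f w) \<partial>M) = exp (- lin_var v 0 0 u / 2)"
      by (rule char_lin_cong) (simp add: f)
    moreover have "(\<integral>w. iexp (t * g w) \<partial>M) = exp (- lin_var (- (t * b)) 0 t (- (t * a)) / 2)"
      by (rule char_lin_cong) (simp add: g algebra_simps)
    ultimately show ?thesis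
      by simp
  qed
  finally show ?thesis .
qed

lemma cond_var_eq_residual_variance:
  fixes W :: "'a \<Rightarrow> 'b::topological_space"
  assumes [measurable]: "W \<in> borel_measurable M" "g \<in> borel_measurable borel"
    and g: "\<And>w. g (W w) = a * XSt1 w + b * XM0 w"
    and indep: "distr M (borel \<Otimes>\<^sub>M borel) (\<lambda>w. (W w, XSt w - a * XSt1 w - b * XM0 w)) =
      distr M borel W \<Otimes>\<^sub>M distr M borel (\<lambda>w. XSt w - a * XSt1 w - b * XM0 w)"
  shows "AE w in M. cond_var M (sigma_rv M W) XSt w = lin_var (- b) 0 1 (- a)"
proof -
  define R where "R = (\<lambda>w. XSt w - a * XSt1 w - b * XM0 w)"
  have [measurable]: "R \<in> borel_measurable M"
    unfolding R_def by measurable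
  have "distr M borel R = normal_measure 0 (lin_var (- b) 0 1 (- a))"
    using distr_lin[of "- b" 0 1 "- a"] by (simp add: R_def algebra_simps)
  note R_moments = normal_law_moments[OF \<open>R \<in> borel_measurable M\<close> this lin_var_nonneg]
  have "integrable M XSt"
    using normal_law_moments(1)[OF _ distr_lin[of 0 0 1 0] lin_var_nonneg] by simp
  then have "AE w in M. cond_var M (sigma_rv M W) XSt w = variance R"
    using indep R_moments(1,2) by (intro cond_var_add_indep_law[where g = g]) (simp_all add: R_def g)
  moreover have "variance R = lin_var (- b) 0 1 (- a)"
    using R_moments(3,4) by simp
  ultimately show ?thesis
    by simp
qed

lemma cond_var_given_XSt1: "AE w in M. cond_var M (sigma_rv M XSt1) XSt w = beta"
proof -
  define s where "s = sqrt (1 - beta)"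
  have "distr M (borel \<Otimes>\<^sub>M borel) (\<lambda>w. (XSt1 w, XSt w - s * XSt1 w - 0 * XM0 w)) =
      distr M borel XSt1 \<Otimes>\<^sub>M distr M borel (\<lambda>w. XSt w - s * XSt1 w - 0 * XM0 w)"
  proof (rule distr_pair_eq_pair_measure_if_char_factors[OF determining_family_iexp])
    show "(\<integral>w. iexp (u * XSt1 w) * iexp (t * (XSt w - s * XSt1 w - 0 * XM0 w)) \<partial>M) =
        (\<integral>w. iexp (u * XSt1 w) \<partial>M) * (\<integral>w. iexp (t * (XSt w - s * XSt1 w - 0 * XM0 w)) \<partial>M)" for u t
      by (rule char_factor_uncorrelated[where v = 0 and u = u and a = s and b = 0]) (simp_all add: s_def)
  qed measurable
  then have "AE w in M. cond_var M (sigma_rv M XSt1) XSt w = lin_var (- 0) 0 1 (- s)"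
    by (intro cond_var_eq_residual_variance[where g = "\<lambda>y. s * y"]) simp_all
  moreover have "lin_var (- 0) 0 1 (- s) = beta"
    using beta by (simp add: lin_var_def s_def power2_eq_square)
  ultimately show ?thesis
    by simp
qed

lemma distr_XSt1_XM0_residual_eq_pair_measure:
  assumes "sqrt alpha * rho - b - a * (sqrt alpha * rho) * sqrt (1 - beta) = 0"
    and "sqrt (1 - beta) - a - b * (sqrt alpha * rho) * sqrt (1 - beta) = 0"
  shows "distr M (borel \<Otimes>\<^sub>M borel) (\<lambda>w. ((XSt1 w, XM0 w), XSt w - a * XSt1 w - b * XM0 w)) =
    distr M borel (\<lambda>w. (XSt1 w, XM0 w)) \<Otimes>\<^sub>M distr M borel (\<lambda>w. XSt w - a * XSt1 w - b * XM0 w)"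
proof (rule distr_pair_eq_pair_measure_if_char_factors[OF
      determining_family_pair[OF determining_family_iexp, unfolded borel_prod]])
  fix p :: "real \<times> real" and t :: real
  obtain u v where p: "p = (u, v)"
    by fastforce
  have "(case p of (i, t) \<Rightarrow> \<lambda>(x, y). iexp (i * x) * iexp (t * y)) (XSt1 w, XM0 w) =
      iexp (v * XM0 w + u * XSt1 w)" for w
    by (simp add: p algebra_simps flip: exp_add)
  moreover have "(\<integral>w. iexp (v * XM0 w + u * XSt1 w) * iexp (t * (XSt w - a * XSt1 w - b * XM0 w)) \<partial>M) =
      (\<integral>w. iexp (v * XM0 w + u * XSt1 w) \<partial>M) * (\<integral>w. iexp (t * (XSt w - a * XSt1 w - b * XM0 w)) \<partial>M)"
  proof (rule char_factor_uncorrelated)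
    show "v * (sqrt alpha * rho - b - a * (sqrt alpha * rho) * sqrt (1 - beta)) = 0"
      "u * (sqrt (1 - beta) - a - b * (sqrt alpha * rho) * sqrt (1 - beta)) = 0"
      by (simp_all only: assms mult_zero_right)
  qed simp_all
  ultimately show "(\<integral>w. (case p of (i, t) \<Rightarrow> \<lambda>(x, y). iexp (i * x) * iexp (t * y)) (XSt1 w, XM0 w) *
        iexp (t * (XSt w - a * XSt1 w - b * XM0 w)) \<partial>M) =
      (\<integral>w. (case p of (i, t) \<Rightarrow> \<lambda>(x, y). iexp (i * x) * iexp (t * y)) (XSt1 w, XM0 w) \<partial>M) *
      (\<integral>w. iexp (t * (XSt w - a * XSt1 w - b * XM0 w)) \<partial>M)"
    by simp
qed (unfold borel_prod[symmetric], measurable)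

lemma cond_var_given_XSt1_XM0_le:
  "AE w in M. cond_var M (sigma_rv M (\<lambda>w. (XSt1 w, XM0 w))) XSt w \<le> beta * (1 - beta * rho\<^sup>2 * alpha)"
proof -
  define s k where "s = sqrt (1 - beta)" and "k = sqrt alpha * rho"
  have s2: "s\<^sup>2 = 1 - beta" and k2: "k\<^sup>2 = alpha * rho\<^sup>2"
    using alpha beta by (simp_all add: s_def k_def power_mult_distrib)
  have "rho\<^sup>2 \<le> 1"
    using abs_rho_le_1 by (simp add: abs_square_le_1)
  then have "k\<^sup>2 < 1"
    using alpha by (simp add: k2) (smt (verit) mult_left_le)
  define a b where "a = s * (1 - k\<^sup>2) / (1 - s\<^sup>2 * k\<^sup>2)" and "b = k * beta / (1 - s\<^sup>2 * k\<^sup>2)"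
  note regression = regression_residual_variance_le[OF s2 beta(1) \<open>k\<^sup>2 < 1\<close>, folded a_def b_def]
  have "(\<lambda>p. a * fst p + b * snd p) \<in> borel_measurable (borel :: (real \<times> real) measure)"
    unfolding borel_prod[symmetric] by measurable
  moreover have "distr M (borel \<Otimes>\<^sub>M borel) (\<lambda>w. ((XSt1 w, XM0 w), XSt w - a * XSt1 w - b * XM0 w)) =
      distr M borel (\<lambda>w. (XSt1 w, XM0 w)) \<Otimes>\<^sub>M distr M borel (\<lambda>w. XSt w - a * XSt1 w - b * XM0 w)"
    using regression(1,2) by (intro distr_XSt1_XM0_residual_eq_pair_measure) (simp_all only: s_def k_def)
  ultimately have cond_var_eq:
    "AE w in M. cond_var M (sigma_rv M (\<lambda>w. (XSt1 w, XM0 w))) XSt w = lin_var (- b) 0 1 (- a)"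
    by (intro cond_var_eq_residual_variance) (simp_all, unfold borel_prod[symmetric], measurable)
  have "lin_var (- b) 0 1 (- a) = 1 + a\<^sup>2 + b\<^sup>2 + 2 * (k * s * a * b - k * b - s * a)"
    by (simp add: lin_var_def s_def k_def power2_eq_square algebra_simps)
  also have "\<dots> \<le> beta * (1 - beta * k\<^sup>2)"
    by (rule regression(3))
  also have "\<dots> = beta * (1 - beta * rho\<^sup>2 * alpha)"
    by (simp add: k2 mult_ac)
  finally show ?thesis
    using cond_var_eq by (auto elim: eventually_mono)
qed

end

theorem lemma2:
  fixes M :: "'a measure"
    and XM0 XS0 XSt XSt1 :: "'a \<Rightarrow> real"
    and rho alpha beta :: real
  assumes "prob_space M"
    and "std_bivariate_normal M XM0 XS0 rho"
    and "XSt \<in> borel_measurable M" and "XSt1 \<in> borel_measurable M"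
    and "0 < alpha" and "alpha < 1" and "0 < beta" and "beta < 1"
    and "distr M borel (\<lambda>w. (XM0 w, XS0 w, XSt w, XSt1 w)) =
         distr M borel (\<lambda>w. (XM0 w, XS0 w)) \<bind>
           (\<lambda>(m, s). normal_measure (sqrt alpha * s) (1 - alpha) \<bind>
             (\<lambda>x. normal_measure (sqrt (1 - beta) * x) beta \<bind>
               (\<lambda>y. return borel (m, s, x, y))))"
  shows "(AE w in M. cond_var M (sigma_rv M XSt1) XSt w = beta) \<and>
         (AE w in M. cond_var M (sigma_rv M (\<lambda>w. (XSt1 w, XM0 w))) XSt w
                       \<le> beta * (1 - beta * rho\<^sup>2 * alpha))"
proof -
  interpret noised_bivariate_normal M XM0 XS0 XSt XSt1 rho alpha beta
    using assms by (intro noised_bivariate_normal.intro noised_bivariate_normal_axioms.intro)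
  show ?thesis
    using cond_var_given_XSt1 cond_var_given_XSt1_XM0_le by simp
qed

end
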